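(* Let $p$ be a prime with $p\equiv 1\pmod{12}$. There exist $x,y\in\mathbb{F}_p$ with $x^4+6x^2-3=0$ and $y^2=x^3-x$ if and only if there exists $y\in\mathbb{F}_p$ with $y^8+360y^4-48=0$. *)

theory Defs
  imports "HOL-Number_Theory.Number_Theory"
begin

end

theory Submission
  imports Defs
begin

text \<open>
  Over any ring, \<open>(x\<^sup>3 - x)\<^sup>4 + 360 (x\<^sup>3 - x)\<^sup>2 - 48\<close> is a multiple of
  \<open>x\<^sup>4 + 6x\<^sup>2 - 3\<close>, so a point \<open>(x, y)\<close> of the curve \<open>y\<^sup>2 = x\<^sup>3 - x\<close> with \<open>x\<close> a root of
  the quartic gives the root \<open>y\<close> of the octic.  Conversely, a root \<open>y\<close> of the octic
  yields such a point with the same \<open>y\<close> and \<open>x = 52 y\<^sup>2 / (y\<^sup>4 - 28)\<close>, by two further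
  polynomial identities.  The division is legitimate modulo every odd prime: the
  remainder of the octic modulo \<open>y\<^sup>4 - 28\<close> is \<open>2\<^sup>6 \<cdot> 13\<^sup>2\<close>, and \<open>28\<close> is not a fourth
  power modulo \<open>13\<close>.
\<close>

lemma quartic_divides_octic_of_curve:
  fixes x :: "'a::comm_ring_1"
  shows "(x^3 - x)^4 + 360*(x^3 - x)^2 - 48
    = (x^8 - 10*x^6 + 69*x^4 - 88*x^2 + 16) * (x^4 + 6*x^2 - 3)"
  by (simp add: algebra_simps power_numeral_reduce)

lemma octic_root_of_curve_point:
  fixes x y m :: int
  assumes quartic: "[x^4 + 6*x^2 - 3 = 0] (mod m)" and curve: "[y^2 = x^3 - x] (mod m)"
  shows "[y^8 + 360*y^4 - 48 = 0] (mod m)"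
proof -
  have "y^8 + 360*y^4 - 48 = (y^2)^4 + 360*(y^2)^2 - 48"
    by (simp flip: power_mult)
  also have "[\<dots> = (x^3 - x)^4 + 360*(x^3 - x)^2 - 48] (mod m)"
    by (intro cong_add cong_diff cong_mult cong_pow cong_refl curve)
  also have "(x^3 - x)^4 + 360*(x^3 - x)^2 - 48
      = (x^8 - 10*x^6 + 69*x^4 - 88*x^2 + 16) * (x^4 + 6*x^2 - 3)"
    by (rule quartic_divides_octic_of_curve)
  also have "[\<dots> = (x^8 - 10*x^6 + 69*x^4 - 88*x^2 + 16) * 0] (mod m)"
    by (intro cong_mult cong_refl quartic)
  finally show ?thesis by simp
qed

lemma curve_point_of_octic_root:
  fixes y m :: int
  assumes octic: "[y^8 + 360*y^4 - 48 = 0] (mod m)" and coprime: "coprime (y^4 - 28) m"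
  shows "\<exists>x. [x^4 + 6*x^2 - 3 = 0] (mod m) \<and> [y^2 = x^3 - x] (mod m)"
proof -
  define d where "d = y^4 - 28"
  obtain u where u: "[d * u = 1] (mod m)"
    using coprime cong_solve_coprime_int unfolding d_def by blast
  define x where "x = 52 * y^2 * u"
  have dx: "[d * x = 52 * y^2] (mod m)"
  proof -
    have "d * x = (d * u) * (52 * y^2)" unfolding x_def by (simp add: algebra_simps)
    also have "[\<dots> = 1 * (52 * y^2)] (mod m)" by (intro cong_mult cong_refl u)
    finally show ?thesis by simp
  qed
  have "d^4 * (x^4 + 6*x^2 - 3) = (d*x)^4 + 6*d^2*(d*x)^2 - 3*d^4"
    by (simp add: algebra_simps power_numeral_reduce)
  also have "[\<dots> = (52*y^2)^4 + 6*d^2*(52*y^2)^2 - 3*d^4] (mod m)"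
    by (intro cong_add cong_diff cong_mult cong_pow cong_refl dx)
  also have "(52*y^2)^4 + 6*d^2*(52*y^2)^2 - 3*d^4
      = (38416 + 17640*y^4 - 3*y^8) * (y^8 + 360*y^4 - 48)"
    unfolding d_def by (simp add: algebra_simps power_numeral_reduce)
  also have "[\<dots> = (38416 + 17640*y^4 - 3*y^8) * 0] (mod m)"
    by (intro cong_mult cong_refl octic)
  finally have "[(x^4 + 6*x^2 - 3) * d^4 = 0 * d^4] (mod m)"
    by (simp add: mult.commute)
  then have quartic: "[x^4 + 6*x^2 - 3 = 0] (mod m)"
    using coprime cong_mult_rcancel unfolding d_def by (metis coprime_power_left_iff)
  have "d^3 * (x^3 - x) = (d*x)^3 - d^2*(d*x)"
    by (simp add: algebra_simps power_numeral_reduce)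
  also have "[\<dots> = (52*y^2)^3 - d^2*(52*y^2)] (mod m)"
    by (intro cong_add cong_diff cong_mult cong_pow cong_refl dx)
  also have "(52*y^2)^3 - d^2*(52*y^2) = d^3 * y^2 + (392*y^2 - y^6) * (y^8 + 360*y^4 - 48)"
    unfolding d_def by (simp add: algebra_simps power_numeral_reduce)
  also have "[\<dots> = d^3 * y^2 + (392*y^2 - y^6) * 0] (mod m)"
    by (intro cong_add cong_mult cong_refl octic)
  finally have "[(x^3 - x) * d^3 = y^2 * d^3] (mod m)"
    by (simp add: mult.commute)
  then have curve: "[y^2 = x^3 - x] (mod m)"
    using coprime cong_mult_rcancel unfolding d_def by (metis coprime_power_left_iff cong_sym)
  from quartic curve show ?thesis by blast
qed

lemma fourth_power_mod_13_ne_2: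
  fixes y :: int
  shows "\<not> [y^4 = 2] (mod 13)"
proof
  assume "[y^4 = 2] (mod 13)"
  then have "(y mod 13)^4 mod 13 = 2"
    by (simp add: cong_def power_mod)
  moreover have "y mod 13 \<in> set [0..12]" by simp
  ultimately show False
    by (auto simp: upto.simps)
qed

lemma octic_root_coprime:
  fixes y p :: int
  assumes "prime p" and "p \<noteq> 2" and octic: "[y^8 + 360*y^4 - 48 = 0] (mod p)"
  shows "coprime (y^4 - 28) p"
proof (rule ccontr)
  assume "\<not> coprime (y^4 - 28) p"
  then have dvd: "p dvd y^4 - 28"
    using \<open>prime p\<close> by (metis coprime_commute prime_imp_coprime)
  have "p dvd (y^8 + 360*y^4 - 48) - (y^4 + 388) * (y^4 - 28)"
    using octic dvd by (simp add: cong_0_iff)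
  moreover have "(y^8 + 360*y^4 - 48) - (y^4 + 388) * (y^4 - 28) = 2^6 * 13^2"
    by (simp add: algebra_simps power_numeral_reduce)
  ultimately have "p dvd 2 \<or> p dvd 13"
    using \<open>prime p\<close> by (metis prime_dvd_mult_iff prime_dvd_power)
  then have "p = 13"
    using \<open>prime p\<close> \<open>p \<noteq> 2\<close> primes_dvd_imp_eq[of p 2] primes_dvd_imp_eq[of p 13] by auto
  with dvd have "13 dvd (y^4 - 28) + 2 * 13"
    by (intro dvd_add) simp_all
  then have "[y^4 = 2] (mod 13)"
    by (simp add: cong_iff_dvd_diff)
  then show False
    using fourth_power_mod_13_ne_2 by blast
qed

theorem lemma1:
  fixes p :: nat
  assumes "prime p" and "[p = 1] (mod 12)"
  shows "(\<exists>x y :: int. [x^4 + 6*x^2 - 3 = 0] (mod int p) \<and> [y^2 = x^3 - x] (mod int p))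
     \<longleftrightarrow> (\<exists>y :: int. [y^8 + 360*y^4 - 48 = 0] (mod int p))"
proof
  assume "\<exists>x y :: int. [x^4 + 6*x^2 - 3 = 0] (mod int p) \<and> [y^2 = x^3 - x] (mod int p)"
  then show "\<exists>y :: int. [y^8 + 360*y^4 - 48 = 0] (mod int p)"
    using octic_root_of_curve_point by blast
next
  assume "\<exists>y :: int. [y^8 + 360*y^4 - 48 = 0] (mod int p)"
  then obtain y :: int where octic: "[y^8 + 360*y^4 - 48 = 0] (mod int p)" by blast
  have "int p \<noteq> 2"
    using assms(2) by (auto simp: cong_def)
  with \<open>prime p\<close> octic have "coprime (y^4 - 28) (int p)"
    by (intro octic_root_coprime) simp_all
  with octic show "\<exists>x y :: int. [x^4 + 6*x^2 - 3 = 0] (mod int p) \<and> [y^2 = x^3 - x] (mod int p)"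
    using curve_point_of_octic_root by blast
qed

end
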